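(* Let $n,d\in\mathbb N$, $\tau\in(0,n]$, $\sigma>0$, and let $v:\mathbb R^n\to\mathbb R^d$ be continuous. Suppose that for every $E\subset\mathbb R^n$ with $\mathcal H^\tau(E)=0$ and every $\varepsilon>0$ there exists a family of compact sets $\{D_i\}_{i\in\mathbb N}$ with $E\subset\bigcup_iD_i$, $\sum_i[\operatorname{diam}D_i]^\tau<\varepsilon$ and $\sum_i[\operatorname{diam}v(D_i)]^\sigma<\varepsilon$. Then $v$ has the $(\tau,\sigma)$-$N_*$-property: for every $q\in[0,\sigma]$ and every $E\subset\mathbb R^n$ with $\mathcal H^\tau(E)=0$, $$\mathcal H^{\tau(1-\frac q\sigma)}(E\cap v^{-1}(y))=0\quad\text{for }\mathcal H^q\text{-almost all }y\in\mathbb R^d.$$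
   Context: $\mathcal H^s$ denotes the $s$-dimensional Hausdorff measure; $\mathcal H^0$ is the counting measure. *)

theory Defs
  imports "HOL-Analysis.Analysis"
begin

text \<open>Contribution of one covering set to the s-dimensional Hausdorff content:
  (diam C)^s, with the conventions that the empty set contributes 0 and that
  (diam C)^0 = 1 for nonempty C (so that H^0 is the counting measure).
  The normalising constant is omitted: it does not affect null sets.\<close>
definition hcontent :: "real \<Rightarrow> 'a::metric_space set \<Rightarrow> ennreal" where
  "hcontent s C = (if C = {} then 0 else if s = 0 then 1 else ennreal (diameter C powr s))"

definition hausdorff_pre :: "real \<Rightarrow> real \<Rightarrow> 'a::metric_space set \<Rightarrow> ennreal" where
  "hausdorff_pre s \<delta> E =
     (INF C \<in> {C :: nat \<Rightarrow> 'a set. (\<forall>i. bounded (C i) \<and> diameter (C i) < \<delta>) \<and> E \<subseteq> (\<Union>i. C i)}.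
        (\<Sum>i. hcontent s (C i)))"

definition hausdorff :: "real \<Rightarrow> 'a::metric_space set \<Rightarrow> ennreal" where
  "hausdorff s E = (SUP \<delta> \<in> {0<..}. hausdorff_pre s \<delta> E)"

definition N_star_property :: "real \<Rightarrow> real \<Rightarrow> ('a::metric_space \<Rightarrow> 'b::metric_space) \<Rightarrow> bool" where
  "N_star_property \<tau> \<sigma> v \<longleftrightarrow>
     (\<forall>q \<in> {0..\<sigma>}. \<forall>E. hausdorff \<tau> E = 0 \<longrightarrow>
        hausdorff q {y. hausdorff (\<tau> * (1 - q / \<sigma>)) (E \<inter> v -` {y}) \<noteq> 0} = 0)"

end

(*
  Only 0 < q < sigma needs an argument: for q = 0 the fibres lie in the H^tau-null set E, and
  for q = sigma every y with a nonempty fibre lies in the H^sigma-null image v(E).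

  Put s = tau (1 - q/sigma) and take a cover D_i of E with sum diam(D_i)^tau and
  sum diam(v(D_i))^sigma below eps. The fibre over y is covered by the D_i with y in v(D_i), so
  H^s_1(E cap v^-1(y)) > t forces sum_{y in v(D_i)} diam(D_i)^s > t. Spreading the weight
  diam(D_i)^s / t over the dyadic cells of side about diam(v(D_i)) next to v(D_i), every such y
  lies on a dyadic path of total weight > 1. A stopping-time selection in the dyadic tree covers
  these points by cells whose total q-content is bounded by the weighted q-content of all cells,
  and Young's inequality diam(D_i)^s r^q <= diam(D_i)^tau + r^sigma makes that O(eps).
*)
theory Submission
  imports Defs
begin

section \<open>Nonnegative sums and elementary inequalities\<close>

text \<open>The library fact \<open>summable_on_ennreal\<close> only covers functions that factor through \<open>enat\<close>.\<close>
lemma summable_on_ennreal_fun [simp]: "(f :: 'a \<Rightarrow> ennreal) summable_on A"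
  by (simp add: nonneg_summable_on_complete)

lemma suminf_eq_infsum_ennreal: "(\<Sum>n. f n) = infsum (f :: nat \<Rightarrow> ennreal) UNIV"
proof -
  have "(f has_sum infsum f UNIV) UNIV" by (rule has_sum_infsum) simp
  then show ?thesis by (rule sums_unique[OF has_sum_imp_sums, symmetric])
qed

lemma infsum_mono_set_ennreal: "A \<subseteq> B \<Longrightarrow> infsum (f :: 'a \<Rightarrow> ennreal) A \<le> infsum f B"
  by (rule infsum_mono_neutral) auto

lemma sum_le_infsum_ennreal: "finite J \<Longrightarrow> J \<subseteq> A \<Longrightarrow> sum (f :: 'a \<Rightarrow> ennreal) J \<le> infsum f A"
  using infsum_mono_set_ennreal[of J A f] by (simp add: infsum_finite)

lemma infsum_cmult_right_ennreal:
  assumes "c \<noteq> (\<infinity> :: ennreal)"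
  shows "infsum (\<lambda>x. f x * c) A = infsum f A * c"
proof (cases "c = 0")
  case False
  have "(sum f \<longlongrightarrow> infsum f A) (finite_subsets_at_top A)"
    using has_sum_infsum[of f A] by (simp add: has_sum_def)
  then have "((\<lambda>F. sum f F * c) \<longlongrightarrow> infsum f A * c) (finite_subsets_at_top A)"
    by (rule tendsto_mult_ennreal[OF _ tendsto_const]) (use assms False in auto)
  then have "((\<lambda>x. f x * c) has_sum (infsum f A * c)) A"
    by (simp add: has_sum_def sum_distrib_right)
  then show ?thesis by (rule infsumI)
qed simp

lemma infsum_cmult_left_ennreal:
  "c \<noteq> (\<infinity> :: ennreal) \<Longrightarrow> infsum (\<lambda>x. c * f x) A = c * infsum f A"
  using infsum_cmult_right_ennreal[of c f A] by (simp add: mult.commute)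

lemma infsum_sum_ennreal:
  "finite I \<Longrightarrow> infsum (\<lambda>x. \<Sum>i\<in>I. (f i x :: ennreal)) A = (\<Sum>i\<in>I. infsum (f i) A)"
  by (induction I rule: finite_induct) (simp_all add: infsum_add)

lemma infsum_multiplicity_le:
  fixes \<alpha> h :: "'i \<Rightarrow> ennreal" and N :: "'i \<Rightarrow> 'r set" and g :: "'r \<Rightarrow> ennreal"
  assumes "\<And>i. finite (N i)" "\<And>i. card (N i) \<le> M"
    and "\<And>i R. R \<in> N i \<Longrightarrow> g R = h i" "\<And>R. g R \<noteq> \<infinity>"
  shows "infsum (\<lambda>R. infsum \<alpha> {i. R \<in> N i} * g R) UNIV \<le> of_nat M * infsum (\<lambda>i. \<alpha> i * h i) UNIV"
proof (rule infsum_le_finite_sums)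
  fix F :: "'r set" assume "finite F"
  have split: "infsum \<alpha> {i. R \<in> N i} * g R = infsum (\<lambda>i. if R \<in> N i then \<alpha> i * g R else 0) UNIV" for R
  proof -
    have "infsum \<alpha> {i. R \<in> N i} * g R = infsum (\<lambda>i. \<alpha> i * g R) {i. R \<in> N i}"
      using assms(4) by (simp add: infsum_cmult_right_ennreal)
    also have "\<dots> = infsum (\<lambda>i. if R \<in> N i then \<alpha> i * g R else 0) UNIV"
      by (rule infsum_cong_neutral) auto
    finally show ?thesis .
  qed
  have "(\<Sum>R\<in>F. infsum \<alpha> {i. R \<in> N i} * g R) =
      (\<Sum>R\<in>F. infsum (\<lambda>i. if R \<in> N i then \<alpha> i * g R else 0) UNIV)"
    by (simp only: split)
  also have "\<dots> = infsum (\<lambda>i. \<Sum>R\<in>F. if R \<in> N i then \<alpha> i * g R else 0) UNIV"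
    by (rule infsum_sum_ennreal[OF \<open>finite F\<close>, symmetric])
  also have "\<dots> \<le> infsum (\<lambda>i. of_nat M * (\<alpha> i * h i)) UNIV"
  proof (rule infsum_mono)
    fix i
    have "(\<Sum>R\<in>F. if R \<in> N i then \<alpha> i * g R else 0) = (\<Sum>R\<in>F \<inter> N i. \<alpha> i * g R)"
      using \<open>finite F\<close> by (simp add: sum.inter_restrict)
    also have "\<dots> = (\<Sum>R\<in>F \<inter> N i. \<alpha> i * h i)"
      using assms(3) by (intro sum.cong) auto
    also have "\<dots> = of_nat (card (F \<inter> N i)) * (\<alpha> i * h i)"
      by simp
    also have "\<dots> \<le> of_nat M * (\<alpha> i * h i)"
      using assms(1,2) card_mono[OF assms(1), of "F \<inter> N i"]
      by (intro mult_right_mono) (auto intro: order_trans)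
    finally show "(\<Sum>R\<in>F. if R \<in> N i then \<alpha> i * g R else 0) \<le> of_nat M * (\<alpha> i * h i)" .
  qed simp_all
  also have "\<dots> = of_nat M * infsum (\<lambda>i. \<alpha> i * h i) UNIV"
    by (rule infsum_cmult_left_ennreal) simp
  finally show "(\<Sum>R\<in>F. infsum \<alpha> {i. R \<in> N i} * g R) \<le> of_nat M * infsum (\<lambda>i. \<alpha> i * h i) UNIV" .
qed simp

lemma sums_halves: "(\<lambda>i. x / 2 ^ Suc i) sums (x :: real)"
proof -
  have "(\<lambda>i. x / 2 * (1/2) ^ i) sums (x / 2 * (1 / (1 - 1/2)))"
    by (intro sums_mult geometric_sums) auto
  then show ?thesis by (simp add: field_simps)
qed

lemma suminf_ennreal_halves:
  assumes "0 \<le> x"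
  shows "(\<Sum>i. ennreal (x / 2 ^ Suc i)) = ennreal x"
proof -
  have "(\<Sum>i. ennreal (x / 2 ^ Suc i)) = ennreal (\<Sum>i. x / 2 ^ Suc i)"
    by (rule suminf_ennreal2) (use assms sums_summable[OF sums_halves] in auto)
  then show ?thesis
    by (simp only: sums_unique[OF sums_halves, symmetric])
qed

lemma ennreal_inverse_Suc_less: "0 < (x :: ennreal) \<Longrightarrow> \<exists>k. ennreal (1 / real (Suc k)) < x"
proof (cases x)
  case (real r)
  moreover assume "0 < x"
  ultimately have "0 < r" by simp
  then obtain k where "inverse (real (Suc k)) < r" using reals_Archimedean by blast
  then show ?thesis using real by (intro exI[of _ k]) (simp add: ennreal_less_iff divide_inverse)
qed (auto intro: exI[of _ 0])

lemma powr_less_cancel_nonneg: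
  fixes x y s :: real
  assumes "0 \<le> x" "0 \<le> y" "0 < s" "x powr s < y powr s"
  shows "x < y"
  using assms powr_mono2[of s y x] by (meson less_imp_le not_le)

lemma powr_interpolation_le:
  fixes a b \<tau> \<sigma> q :: real
  assumes "0 \<le> a" "0 \<le> b" "0 < \<sigma>" "0 \<le> q" "q \<le> \<sigma>"
  shows "a powr (\<tau> * (1 - q / \<sigma>)) * b powr q \<le> a powr \<tau> + b powr \<sigma>"
proof (cases "a = 0 \<or> b = 0")
  case False
  define \<theta> where "\<theta> = q / \<sigma>"
  have \<theta>: "0 \<le> \<theta>" "\<theta> \<le> 1" using assms by (auto simp: \<theta>_def)
  have "a powr (\<tau> * (1 - \<theta>)) * b powr q = (a powr \<tau>) powr (1 - \<theta>) * (b powr \<sigma>) powr \<theta>"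
    using assms by (simp add: powr_powr \<theta>_def mult.commute)
  also have "\<dots> \<le> (1 - \<theta>) * a powr \<tau> + \<theta> * b powr \<sigma>"
    using False assms \<theta> by (intro Youngs_inequality_0) auto
  also have "\<dots> \<le> a powr \<tau> + b powr \<sigma>"
    using \<theta> by (intro add_mono mult_left_le_one_le) auto
  finally show ?thesis by (simp add: \<theta>_def)
qed (use assms in auto)

lemma mult_le_of_split:
  fixes x t m c S S' :: real
  assumes "0 \<le> m" "m < t" "0 \<le> x" "x * (t - m) \<le> S'" "m * c + S' \<le> S" "S \<le> c * t" "0 \<le> c"
  shows "x * t \<le> S"
proof -
  have "x * t * (t - m) = t * (x * (t - m))" by (simp add: algebra_simps)
  also have "\<dots> \<le> t * (S - m * c)" using assms by (intro mult_left_mono) auto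
  also have "\<dots> \<le> S * (t - m)"
  proof -
    have "m * S \<le> m * (c * t)" using assms by (intro mult_left_mono) auto
    then show ?thesis by (simp add: algebra_simps)
  qed
  finally show ?thesis using assms by (simp add: mult_le_cancel_right)
qed

lemma ennreal_mult_le_of_split:
  fixes x t m c S S' :: ennreal
  assumes "m < t" "t \<le> 1" "x * (t - m) \<le> S'" "m * c + S' \<le> S" "S < c * t" "c \<noteq> \<infinity>"
  shows "x * t \<le> S"
proof -
  have "t \<noteq> \<infinity>" "m \<noteq> \<infinity>" "S \<noteq> \<infinity>"
    using assms(1,2,5) by (auto simp: top_unique)
  moreover have "S' \<noteq> \<infinity>"
    using assms(4) \<open>S \<noteq> \<infinity>\<close> by (auto simp: top_unique)
  ultimately obtain t' m' c' S0 S0' where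
    nonneg: "0 \<le> t'" "0 \<le> m'" "0 \<le> c'" "0 \<le> S0" "0 \<le> S0'" and
    eq: "t = ennreal t'" "m = ennreal m'" "c = ennreal c'" "S = ennreal S0" "S' = ennreal S0'"
    using assms(6) by (metis ennreal_cases infinity_ennreal_def)
  have "m' < t'" using assms(1) eq nonneg by (simp add: ennreal_less_iff)
  then have diff: "t - m = ennreal (t' - m')" using eq nonneg by (simp add: ennreal_minus)
  show ?thesis
  proof (cases "x = \<infinity>")
    case True
    then have "x * (t - m) = \<infinity>" using \<open>m' < t'\<close> diff by (simp add: ennreal_mult_top)
    then show ?thesis using assms(3) \<open>S' \<noteq> \<infinity>\<close> by (simp add: top_unique)
  next
    case False
    then obtain x' where x': "0 \<le> x'" "x = ennreal x'" by (cases x) auto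
    have "x' * (t' - m') \<le> S0'" using assms(3) x' diff eq nonneg \<open>m' < t'\<close>
      by (simp add: ennreal_mult[symmetric] ennreal_le_iff)
    moreover have "m' * c' + S0' \<le> S0" using assms(4) eq nonneg
      by (simp add: ennreal_mult[symmetric] ennreal_plus[symmetric] del: ennreal_plus)
    moreover have "S0 \<le> c' * t'" using assms(5) eq nonneg
      by (simp add: ennreal_mult[symmetric] ennreal_less_iff)
    ultimately have "x' * t' \<le> S0"
      using mult_le_of_split nonneg \<open>m' < t'\<close> x'(1) by blast
    then show ?thesis using x' eq nonneg by (simp add: ennreal_mult[symmetric])
  qed
qed

section \<open>Null sets of the Hausdorff measure\<close>

lemma hcontent_eq_diameter_powr: "0 < s \<Longrightarrow> hcontent s C = ennreal (diameter C powr s)"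
  by (auto simp: hcontent_def)

definition null_covered :: "real \<Rightarrow> 'a::metric_space set \<Rightarrow> bool" where
  "null_covered s E \<longleftrightarrow>
     (\<forall>\<delta>>0. \<forall>\<eta>>0. \<exists>C. (\<forall>i. bounded (C i) \<and> diameter (C i) < \<delta>) \<and> E \<subseteq> (\<Union>i. C i) \<and>
        (\<Sum>i. hcontent s (C i)) < ennreal \<eta>)"

lemma hausdorff_pre_le_cover:
  assumes "\<And>i. bounded (C i)" "\<And>i. diameter (C i) < \<delta>" "E \<subseteq> (\<Union>i. C i)"
  shows "hausdorff_pre s \<delta> E \<le> (\<Sum>i. hcontent s (C i))"
  unfolding hausdorff_pre_def by (rule INF_lower) (use assms in blast)

lemma hausdorff_pre_eq_0_iff:
  "hausdorff_pre s \<delta> E = 0 \<longleftrightarrow>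
   (\<forall>\<eta>>0. \<exists>C. (\<forall>i. bounded (C i) \<and> diameter (C i) < \<delta>) \<and> E \<subseteq> (\<Union>i. C i) \<and>
      (\<Sum>i. hcontent s (C i)) < ennreal \<eta>)"
proof (intro iffI allI impI)
  fix \<eta> :: real
  assume "hausdorff_pre s \<delta> E = 0" "0 < \<eta>"
  then have "hausdorff_pre s \<delta> E < ennreal \<eta>"
    by simp
  then show "\<exists>C. (\<forall>i. bounded (C i) \<and> diameter (C i) < \<delta>) \<and> E \<subseteq> (\<Union>i. C i) \<and>
      (\<Sum>i. hcontent s (C i)) < ennreal \<eta>"
    unfolding hausdorff_pre_def INF_less_iff by blast
next
  assume covers: "\<forall>\<eta>>0. \<exists>C. (\<forall>i. bounded (C i) \<and> diameter (C i) < \<delta>) \<and> E \<subseteq> (\<Union>i. C i) \<and>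
      (\<Sum>i. hcontent s (C i)) < ennreal \<eta>"
  have "hausdorff_pre s \<delta> E \<le> ennreal \<eta>" if \<eta>: "\<eta> > 0" for \<eta>
  proof -
    obtain C where C: "\<forall>i. bounded (C i) \<and> diameter (C i) < \<delta>" "E \<subseteq> (\<Union>i. C i)"
      "(\<Sum>i. hcontent s (C i)) < ennreal \<eta>"
      using covers[rule_format, OF \<eta>] by blast
    then have "hausdorff_pre s \<delta> E \<le> (\<Sum>i. hcontent s (C i))"
      by (intro hausdorff_pre_le_cover) auto
    also have "\<dots> \<le> ennreal \<eta>"
      using C(3) by (rule less_imp_le)
    finally show ?thesis .
  qed
  then show "hausdorff_pre s \<delta> E = 0"
    by (metis ennreal_le_epsilon add_0 le_zero_eq zero_le)
qed

lemma hausdorff_eq_0_iff: "hausdorff s E = 0 \<longleftrightarrow> null_covered s E"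
proof -
  have "hausdorff s E = 0 \<longleftrightarrow> (\<forall>\<delta>>0. hausdorff_pre s \<delta> E = 0)"
    unfolding hausdorff_def by (auto simp: SUP_eq_iff bot_ennreal)
  then show ?thesis
    unfolding hausdorff_pre_eq_0_iff null_covered_def by blast
qed

lemma hausdorff_empty: "hausdorff s {} = 0"
  unfolding hausdorff_eq_0_iff null_covered_def
  by (intro allI impI exI[of _ "\<lambda>_. {}"]) (simp add: hcontent_def)

lemma hausdorff_null_subset: "hausdorff s F = 0 \<Longrightarrow> E \<subseteq> F \<Longrightarrow> hausdorff s E = 0"
  unfolding hausdorff_eq_0_iff null_covered_def by (meson order_trans)

lemma hausdorff_null_UN:
  fixes A :: "nat \<Rightarrow> 'a::metric_space set"
  assumes "\<And>k. hausdorff s (A k) = 0"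
  shows "hausdorff s (\<Union>k. A k) = 0"
  unfolding hausdorff_eq_0_iff null_covered_def
proof (intro allI impI)
  fix \<delta> \<eta> :: real assume "\<delta> > 0" "\<eta> > 0"
  then have "\<exists>C. (\<forall>i. bounded (C i) \<and> diameter (C i) < \<delta>) \<and> A k \<subseteq> (\<Union>i. C i) \<and>
      (\<Sum>i. hcontent s (C i)) < ennreal (\<eta> / 2 / 2 ^ Suc k)" for k
    using assms[of k] unfolding hausdorff_eq_0_iff null_covered_def by simp
  then obtain C where C: "\<And>k i. bounded (C k i) \<and> diameter (C k i) < \<delta>" "\<And>k. A k \<subseteq> (\<Union>i. C k i)"
    "\<And>k. (\<Sum>i. hcontent s (C k i)) < ennreal (\<eta> / 2 / 2 ^ Suc k)"
    by metis
  define C' where "C' n = (case prod_decode n of (k, i) \<Rightarrow> C k i)" for n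
  have "(\<Sum>n. hcontent s (C' n)) = (\<Sum>k. \<Sum>i. hcontent s (C k i))"
    unfolding C'_def by (rule suminf_ennreal_2dimen) (auto simp: case_prod_beta)
  also have "\<dots> \<le> (\<Sum>k. ennreal (\<eta> / 2 / 2 ^ Suc k))"
    by (intro suminf_le less_imp_le[OF C(3)]) auto
  also have "\<dots> = ennreal (\<eta> / 2)"
    by (rule suminf_ennreal_halves) (use \<open>\<eta> > 0\<close> in simp)
  also have "\<dots> < ennreal \<eta>"
    using \<open>\<eta> > 0\<close> by (simp add: ennreal_lessI)
  finally have "(\<Sum>n. hcontent s (C' n)) < ennreal \<eta>" .
  moreover have "(\<Union>k. A k) \<subseteq> (\<Union>n. C' n)"
  proof
    fix x assume "x \<in> (\<Union>k. A k)"
    then obtain k i where "x \<in> C k i" using C(2) by blast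
    then show "x \<in> (\<Union>n. C' n)"
      unfolding C'_def by (intro UN_I[of "prod_encode (k, i)"]) auto
  qed
  moreover have "\<forall>n. bounded (C' n) \<and> diameter (C' n) < \<delta>"
    unfolding C'_def using C(1) by (auto split: prod.splits)
  ultimately show "\<exists>C. (\<forall>i. bounded (C i) \<and> diameter (C i) < \<delta>) \<and> (\<Union>k. A k) \<subseteq> (\<Union>i. C i) \<and>
      (\<Sum>i. hcontent s (C i)) < ennreal \<eta>"
    by blast
qed

text \<open>For \<open>s > 0\<close> the mesh condition in the definition of a null set is automatic: a small
  sum \<open>\<Sum> diam(C\<^sub>i)\<^sup>s\<close> forces every \<open>diam(C\<^sub>i)\<close> to be small.\<close>
lemma hausdorff_eq_0_if_covers:
  assumes "0 < s"
    and covers: "\<And>\<epsilon>. 0 < \<epsilon> \<Longrightarrow> \<exists>C. (\<forall>i. bounded (C i)) \<and> X \<subseteq> (\<Union>i. C i) \<and>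
                   (\<Sum>i. ennreal (diameter (C i) powr s)) < ennreal \<epsilon>"
  shows "hausdorff s X = 0"
  unfolding hausdorff_eq_0_iff null_covered_def
proof (intro allI impI)
  fix \<delta> \<eta> :: real assume "0 < \<delta>" "0 < \<eta>"
  define \<epsilon> where "\<epsilon> = min \<eta> (\<delta> powr s)"
  have "0 < \<epsilon>" using \<open>0 < \<delta>\<close> \<open>0 < \<eta>\<close> by (simp add: \<epsilon>_def)
  obtain C where C: "\<forall>i. bounded (C i)" "X \<subseteq> (\<Union>i. C i)"
    "(\<Sum>i. ennreal (diameter (C i) powr s)) < ennreal \<epsilon>"
    using covers[OF \<open>0 < \<epsilon>\<close>] by blast
  have "diameter (C i) < \<delta>" for i
  proof -
    have "ennreal (diameter (C i) powr s) < ennreal \<epsilon>"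
      by (rule ennreal_suminf_lessD[OF C(3)])
    then have "diameter (C i) powr s < \<epsilon>"
      by (simp add: ennreal_less_iff)
    also have "\<epsilon> \<le> \<delta> powr s"
      by (simp add: \<epsilon>_def)
    finally have "diameter (C i) powr s < \<delta> powr s" .
    moreover have "0 \<le> diameter (C i)"
      using C(1) by (simp add: diameter_ge_0)
    ultimately show ?thesis
      using \<open>0 < s\<close> \<open>0 < \<delta>\<close> by (intro powr_less_cancel_nonneg[of _ \<delta> s]) auto
  qed
  moreover have "(\<Sum>i. hcontent s (C i)) < ennreal \<eta>"
  proof -
    have "(\<Sum>i. hcontent s (C i)) = (\<Sum>i. ennreal (diameter (C i) powr s))"
      by (simp add: hcontent_eq_diameter_powr[OF \<open>0 < s\<close>])
    also have "\<dots> < ennreal \<epsilon>"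
      by (rule C(3))
    also have "\<dots> \<le> ennreal \<eta>"
      by (rule ennreal_leI) (simp add: \<epsilon>_def)
    finally show ?thesis .
  qed
  ultimately show "\<exists>C. (\<forall>i. bounded (C i) \<and> diameter (C i) < \<delta>) \<and> X \<subseteq> (\<Union>i. C i) \<and>
      (\<Sum>i. hcontent s (C i)) < ennreal \<eta>"
    using C by blast
qed

lemma hausdorff_eq_0_if_hausdorff_pre_1:
  assumes "0 < s" "hausdorff_pre s 1 X = 0"
  shows "hausdorff s X = 0"
proof (rule hausdorff_eq_0_if_covers[OF \<open>0 < s\<close>])
  fix \<epsilon> :: real assume "0 < \<epsilon>"
  then obtain C where "\<forall>i. bounded (C i) \<and> diameter (C i) < 1" "X \<subseteq> (\<Union>i. C i)"
    "(\<Sum>i. hcontent s (C i)) < ennreal \<epsilon>"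
    using assms(2) unfolding hausdorff_pre_eq_0_iff by blast
  then show "\<exists>C. (\<forall>i. bounded (C i)) \<and> X \<subseteq> (\<Union>i. C i) \<and>
      (\<Sum>i. ennreal (diameter (C i) powr s)) < ennreal \<epsilon>"
    by (auto simp: hcontent_eq_diameter_powr[OF \<open>0 < s\<close>])
qed

lemma hausdorff_pre_fibre_le:
  fixes v :: "'a::metric_space \<Rightarrow> 'b" and D :: "nat \<Rightarrow> 'a set"
  assumes "0 < s" "\<And>i. bounded (D i)" "\<And>i. diameter (D i) < \<delta>" "E \<subseteq> (\<Union>i. D i)"
  shows "hausdorff_pre s \<delta> (E \<inter> v -` {y}) \<le> infsum (\<lambda>i. ennreal (diameter (D i) powr s)) {i. y \<in> v ` D i}"
proof -
  define C where "C i = (if y \<in> v ` D i then D i else {})" for i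
  have "E \<inter> v -` {y} \<subseteq> (\<Union>i. C i)"
    using assms(4) by (fastforce simp: C_def)
  moreover have "0 < \<delta>"
    using diameter_ge_0[OF assms(2)] assms(3) by (rule le_less_trans)
  ultimately have "hausdorff_pre s \<delta> (E \<inter> v -` {y}) \<le> (\<Sum>i. hcontent s (C i))"
    using assms(2,3) by (intro hausdorff_pre_le_cover) (auto simp: C_def)
  also have "\<dots> = infsum (\<lambda>i. hcontent s (C i)) UNIV"
    by (rule suminf_eq_infsum_ennreal)
  also have "\<dots> = infsum (\<lambda>i. hcontent s (C i)) {i. y \<in> v ` D i}"
    by (rule infsum_cong_neutral) (auto simp: C_def hcontent_def)
  also have "\<dots> = infsum (\<lambda>i. ennreal (diameter (D i) powr s)) {i. y \<in> v ` D i}"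
    by (rule infsum_cong) (simp add: C_def hcontent_eq_diameter_powr[OF \<open>0 < s\<close>])
  finally show ?thesis .
qed

section \<open>Stopping-time selection in a weighted tree\<close>

text \<open>A tree whose nodes at level \<open>l\<close> are the pairs \<open>(l, k)\<close>, the parent of \<open>(Suc l, k)\<close> being
  \<open>(l, parent k)\<close>. A node stops when the
  weight of its path (itself included) reaches \<open>1\<close>, or when the weighted cost of its subtree pays
  for it; the stopped nodes with no stopped strict ancestor are selected.\<close>
locale stopping_tree =
  fixes parent :: "'k \<Rightarrow> 'k" and w :: "nat \<times> 'k \<Rightarrow> ennreal" and c :: "nat \<Rightarrow> ennreal"
  assumes c_finite: "c l \<noteq> \<infinity>"
begin

definition descendant :: "nat \<times> 'k \<Rightarrow> nat \<times> 'k \<Rightarrow> bool" where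
  "descendant Q R \<longleftrightarrow> fst Q \<le> fst R \<and> (parent ^^ (fst R - fst Q)) (snd R) = snd Q"

definition path_weight :: "nat \<Rightarrow> 'k \<Rightarrow> ennreal" where
  "path_weight l k = (\<Sum>j<l. w (j, (parent ^^ (l - j)) k))"

definition subtree_cost :: "nat \<times> 'k \<Rightarrow> ennreal" where
  "subtree_cost Q = infsum (\<lambda>R. w R * c (fst R)) {R. descendant Q R}"

definition stops :: "nat \<times> 'k \<Rightarrow> bool" where
  "stops Q \<longleftrightarrow> path_weight (fst Q) (snd Q) < 1 \<and>
     (1 \<le> path_weight (fst Q) (snd Q) + w Q \<or>
      c (fst Q) * (1 - path_weight (fst Q) (snd Q)) \<le> subtree_cost Q)"

definition active :: "nat \<times> 'k \<Rightarrow> bool" where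
  "active Q \<longleftrightarrow> path_weight (fst Q) (snd Q) < 1 \<and>
     (\<forall>j<fst Q. \<not> stops (j, (parent ^^ (fst Q - j)) (snd Q)))"

definition selected :: "(nat \<times> 'k) set" where
  "selected = {Q. active Q \<and> stops Q}"

lemma descendant_refl: "descendant Q Q"
  by (simp add: descendant_def)

lemma descendant_trans:
  assumes "descendant Q R" "descendant R U"
  shows "descendant Q U"
proof -
  have "fst U - fst Q = (fst R - fst Q) + (fst U - fst R)"
    using assms unfolding descendant_def by auto
  then have "(parent ^^ (fst U - fst Q)) (snd U) = (parent ^^ (fst R - fst Q)) ((parent ^^ (fst U - fst R)) (snd U))"
    by (simp add: funpow_add)
  then show ?thesis
    using assms unfolding descendant_def by auto
qed

lemma descendant_child: "parent k = snd Q \<Longrightarrow> descendant Q (Suc (fst Q), k)"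
  by (simp add: descendant_def)

lemma descendant_level_unique:
  "descendant Q R \<Longrightarrow> descendant Q' R \<Longrightarrow> fst Q = fst Q' \<Longrightarrow> Q = Q'"
  by (simp add: descendant_def prod_eq_iff)

lemma descendant_through_child:
  assumes "descendant Q R" "R \<noteq> Q"
  defines "C \<equiv> (Suc (fst Q), (parent ^^ (fst R - Suc (fst Q))) (snd R))"
  shows "fst Q < fst R" "parent (snd C) = snd Q" "descendant C R"
proof -
  have "fst Q \<noteq> fst R"
    using assms(1,2) descendant_level_unique[OF assms(1) descendant_refl] by auto
  then show lt: "fst Q < fst R"
    using assms(1) by (simp add: descendant_def)
  then have "Suc (fst R - Suc (fst Q)) = fst R - fst Q" by simp
  then show "parent (snd C) = snd Q"
    using assms(1) unfolding descendant_def C_def by (metis funpow.simps(2) o_apply snd_conv)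
  show "descendant C R"
    using lt by (simp add: descendant_def C_def)
qed

lemma path_weight_child:
  assumes "parent k' = k"
  shows "path_weight (Suc l) k' = path_weight l k + w (l, k)"
proof -
  have "(parent ^^ (Suc l - j)) k' = (parent ^^ (l - j)) k" if "j < l" for j
  proof -
    have "Suc l - j = Suc (l - j)" using that by simp
    then show ?thesis using assms by (simp add: funpow_Suc_right del: funpow.simps)
  qed
  then show ?thesis
    using assms by (simp add: path_weight_def)
qed

lemma active_child:
  assumes "active Q" "\<not> stops Q" "parent k' = snd Q"
  shows "active (Suc (fst Q), k')"
proof -
  have "path_weight (Suc (fst Q)) k' = path_weight (fst Q) (snd Q) + w Q"
    using path_weight_child[OF assms(3)] by simp
  moreover have "path_weight (fst Q) (snd Q) < 1"
    using assms(1) unfolding active_def by blast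
  then have "\<not> 1 \<le> path_weight (fst Q) (snd Q) + w Q"
    using assms(2) unfolding stops_def by blast
  ultimately have "path_weight (Suc (fst Q)) k' < 1"
    by (simp add: not_le)
  moreover have "\<not> stops (j, (parent ^^ (Suc (fst Q) - j)) k')" if "j < Suc (fst Q)" for j
  proof (cases "j = fst Q")
    case True
    then show ?thesis using assms(2,3) by (simp add: prod_eq_iff)
  next
    case False
    then have "j < fst Q" "Suc (fst Q) - j = Suc (fst Q - j)" using that by auto
    then show ?thesis
      using assms(1,3) unfolding active_def by (simp add: funpow_Suc_right del: funpow.simps)
  qed
  ultimately show ?thesis unfolding active_def by simp
qed

lemma selected_no_strict_descendant:
  assumes "Q \<in> selected" "descendant Q R" "R \<noteq> Q"
  shows "R \<notin> selected"
proof
  assume "R \<in> selected"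
  have "fst Q < fst R"
    by (rule descendant_through_child(1)[OF assms(2,3)])
  then have "\<not> stops (fst Q, (parent ^^ (fst R - fst Q)) (snd R))"
    using \<open>R \<in> selected\<close> unfolding selected_def active_def by blast
  moreover have "(fst Q, (parent ^^ (fst R - fst Q)) (snd R)) = Q"
    using assms(2) unfolding descendant_def by (simp add: prod_eq_iff)
  ultimately have "\<not> stops Q"
    by simp
  then show False
    using assms(1) unfolding selected_def by blast
qed

lemma subtree_cost_ge_self: "w Q * c (fst Q) \<le> subtree_cost Q"
proof -
  have "infsum (\<lambda>R. w R * c (fst R)) {Q} \<le> subtree_cost Q"
    unfolding subtree_cost_def by (rule infsum_mono_set_ennreal) (auto simp: descendant_refl)
  then show ?thesis by simp
qed

lemma subtree_cost_ge_children:
  assumes "finite G" "\<And>C. C \<in> G \<Longrightarrow> fst C = Suc (fst Q) \<and> parent (snd C) = snd Q"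
  shows "w Q * c (fst Q) + (\<Sum>C\<in>G. subtree_cost C) \<le> subtree_cost Q"
proof -
  let ?f = "\<lambda>R. w R * c (fst R)"
  let ?below = "\<Union>C\<in>G. {R. descendant C R}"
  have "(\<Sum>C\<in>G. subtree_cost C) = infsum ?f ?below"
    unfolding subtree_cost_def
  proof (rule sum_infsum)
    fix C C' assume "C \<in> G" "C' \<in> G" "C \<noteq> C'"
    then show "{R. descendant C R} \<inter> {R. descendant C' R} = {}"
      using assms(2)[of C] assms(2)[of C'] descendant_level_unique[of C _ C'] by auto
  qed (use assms(1) in auto)
  moreover have "Q \<notin> ?below"
  proof
    assume "Q \<in> ?below"
    then obtain C where "C \<in> G" "descendant C Q" by blast
    then show False using assms(2)[of C] by (simp add: descendant_def)
  qed
  then have "infsum ?f ({Q} \<union> ?below) = ?f Q + infsum ?f ?below"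
    by (subst infsum_Un_disjoint) auto
  moreover have "{Q} \<union> ?below \<subseteq> {R. descendant Q R}"
  proof -
    have "descendant Q R" if "C \<in> G" "descendant C R" for C R
    proof -
      have "descendant Q C"
        using assms(2)[OF \<open>C \<in> G\<close>] descendant_child[of "snd C" Q] by (metis prod.collapse)
      then show ?thesis using \<open>descendant C R\<close> by (rule descendant_trans)
    qed
    then show ?thesis using descendant_refl by blast
  qed
  then have "infsum ?f ({Q} \<union> ?below) \<le> subtree_cost Q"
    unfolding subtree_cost_def by (rule infsum_mono_set_ennreal)
  ultimately show ?thesis by simp
qed

lemma stops_cost_le:
  assumes "stops Q"
  shows "c (fst Q) * (1 - path_weight (fst Q) (snd Q)) \<le> subtree_cost Q"
proof (cases "1 \<le> path_weight (fst Q) (snd Q) + w Q")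
  case True
  then have "c (fst Q) * (1 - path_weight (fst Q) (snd Q)) \<le> c (fst Q) * w Q"
    by (intro mult_left_mono) (simp_all add: ennreal_minus_le_iff)
  also have "\<dots> \<le> subtree_cost Q"
    using subtree_cost_ge_self[of Q] by (simp add: mult.commute)
  finally show ?thesis .
next
  case False
  then show ?thesis using assms unfolding stops_def by simp
qed

lemma selected_cost_step:
  assumes "active Q" "finite F" "F \<subseteq> selected" "\<forall>R\<in>F. descendant Q R"
    and IH: "\<And>C F'. fst C = Suc (fst Q) \<Longrightarrow> parent (snd C) = snd Q \<Longrightarrow> active C \<Longrightarrow>
        F' \<subseteq> F \<Longrightarrow> F' \<noteq> {} \<Longrightarrow> \<forall>R\<in>F'. descendant C R \<Longrightarrow>
        (\<Sum>R\<in>F'. c (fst R)) * (1 - path_weight (fst C) (snd C)) \<le> subtree_cost C"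
  shows "(\<Sum>R\<in>F. c (fst R)) * (1 - path_weight (fst Q) (snd Q)) \<le> subtree_cost Q"
proof -
  define W where "W = path_weight (fst Q) (snd Q)"
  have "W < 1" using assms(1) unfolding active_def W_def by simp
  show ?thesis
  proof (cases "stops Q")
    case True
    then have "Q \<in> selected" using assms(1) by (simp add: selected_def)
    then have "F \<subseteq> {Q}"
      using assms(3,4) selected_no_strict_descendant by blast
    then have "(\<Sum>R\<in>F. c (fst R)) * (1 - W) \<le> c (fst Q) * (1 - W)"
      by (intro mult_right_mono) (auto simp: subset_singleton_iff)
    also have "\<dots> \<le> subtree_cost Q"
      using stops_cost_le[OF True] unfolding W_def .
    finally show ?thesis unfolding W_def .
  next
    case False
    then have "Q \<notin> F" using assms(3) by (auto simp: selected_def)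
    define child where "child R = (Suc (fst Q), (parent ^^ (fst R - Suc (fst Q))) (snd R))" for R
    have child: "fst (child R) = Suc (fst Q)" "parent (snd (child R)) = snd Q" "descendant (child R) R"
      if "R \<in> F" for R
      using descendant_through_child[of Q R] assms(4) that \<open>Q \<notin> F\<close> by (auto simp: child_def)
    define G where "G = child ` F"
    define X where "X C = (\<Sum>R\<in>{R\<in>F. child R = C}. c (fst R))" for C
    have sum_X: "(\<Sum>R\<in>F. c (fst R)) = (\<Sum>C\<in>G. X C)"
      unfolding X_def G_def by (rule sum.image_gen[OF assms(2)])
    have G: "fst C = Suc (fst Q) \<and> parent (snd C) = snd Q" if "C \<in> G" for C
      using that child unfolding G_def by auto
    have not_stop: "\<not> 1 \<le> W + w Q" "subtree_cost Q < c (fst Q) * (1 - W)"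
      using False \<open>W < 1\<close> unfolding stops_def W_def by auto
    have X_le: "X C * ((1 - W) - w Q) \<le> subtree_cost C" if "C \<in> G" for C
    proof -
      have "active C"
        using active_child[OF assms(1) False, of "snd C"] G[OF that] by (metis prod.collapse)
      moreover have "{R\<in>F. child R = C} \<noteq> {}" using that by (auto simp: G_def)
      moreover have "\<forall>R\<in>{R\<in>F. child R = C}. descendant C R"
        using child(3) by blast
      ultimately have "X C * (1 - path_weight (fst C) (snd C)) \<le> subtree_cost C"
        unfolding X_def by (intro IH) (use G[OF that] in auto)
      moreover have "path_weight (fst C) (snd C) = W + w Q"
        using path_weight_child[of "snd C" "snd Q" "fst Q"] G[OF that] unfolding W_def by simp
      ultimately show ?thesis by (simp add: diff_add_eq_diff_diff_swap_ennreal)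
    qed
    have "(\<Sum>C\<in>G. X C) * (1 - W) \<le> subtree_cost Q"
    proof (rule ennreal_mult_le_of_split[OF _ _ _ _ not_stop(2) c_finite])
      show "w Q < 1 - W"
        using not_stop(1) \<open>W < 1\<close> by (subst less_diff_eq_ennreal) (auto simp: add.commute)
      show "1 - W \<le> 1" by (rule diff_le_self_ennreal)
      show "(\<Sum>C\<in>G. X C) * (1 - W - w Q) \<le> (\<Sum>C\<in>G. subtree_cost C)"
        unfolding sum_distrib_right by (rule sum_mono) (rule X_le)
      show "w Q * c (fst Q) + (\<Sum>C\<in>G. subtree_cost C) \<le> subtree_cost Q"
        using assms(2) G by (intro subtree_cost_ge_children) (auto simp: G_def)
    qed
    then show ?thesis unfolding sum_X W_def .
  qed
qed

text \<open>The invariant of the stopping rule: an active node pays, through its subtree cost, for the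
  selected nodes below it, scaled by the weight still missing on its path.\<close>
lemma selected_cost_below:
  "active Q \<Longrightarrow> finite F \<Longrightarrow> F \<subseteq> selected \<Longrightarrow> \<forall>R\<in>F. descendant Q R \<and> fst R \<le> L \<Longrightarrow>
    (\<Sum>R\<in>F. c (fst R)) * (1 - path_weight (fst Q) (snd Q)) \<le> subtree_cost Q"
proof (induction "L - fst Q" arbitrary: Q F rule: less_induct)
  case less
  show ?case
  proof (rule selected_cost_step[OF less.prems(1-3)])
    show "\<forall>R\<in>F. descendant Q R" using less.prems(4) by blast
    fix C F' assume C: "fst C = Suc (fst Q)" "parent (snd C) = snd Q" "active C"
      and F': "F' \<subseteq> F" "F' \<noteq> {}" "\<forall>R\<in>F'. descendant C R"
    obtain R where "R \<in> F'" using F'(2) by blast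
    then have "descendant C R" "fst R \<le> L"
      using F'(1,3) less.prems(4) by auto
    then have "fst C \<le> L" by (simp add: descendant_def)
    show "(\<Sum>R\<in>F'. c (fst R)) * (1 - path_weight (fst C) (snd C)) \<le> subtree_cost C"
    proof (rule less.hyps)
      show "L - fst C < L - fst Q" using \<open>fst C \<le> L\<close> C(1) by simp
      show "finite F'" using F'(1) less.prems(2) by (rule finite_subset)
      show "F' \<subseteq> selected" using F'(1) less.prems(3) by blast
      show "\<forall>R\<in>F'. descendant C R \<and> fst R \<le> L" using F'(1,3) less.prems(4) by blast
    qed (rule C(3))
  qed
qed

lemma active_root: "active (0, k)"
  by (simp add: active_def path_weight_def)

lemma selected_cost_le: "infsum (\<lambda>R. c (fst R)) selected \<le> infsum (\<lambda>R. w R * c (fst R)) UNIV"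
proof (rule infsum_le_finite_sums)
  show "(\<lambda>R. c (fst R)) summable_on selected" by simp
  fix F assume "finite F" "F \<subseteq> selected"
  define L where "L = Max (insert 0 (fst ` F))"
  have "fst R \<le> L" if "R \<in> F" for R
    unfolding L_def using \<open>finite F\<close> that by (intro Max_ge) auto
  define root where "root R = (0::nat, (parent ^^ fst R) (snd R))" for R
  define G where "G = root ` F"
  define X where "X Q = (\<Sum>R\<in>{R\<in>F. root R = Q}. c (fst R))" for Q
  have "(\<Sum>R\<in>F. c (fst R)) = (\<Sum>Q\<in>G. X Q)"
    unfolding X_def G_def by (rule sum.image_gen[OF \<open>finite F\<close>])
  also have "\<dots> \<le> (\<Sum>Q\<in>G. subtree_cost Q)"
  proof (rule sum_mono)
    fix Q assume "Q \<in> G"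
    then have Q: "Q = (0, snd Q)" by (auto simp: G_def root_def)
    have "X Q * (1 - path_weight (fst Q) (snd Q)) \<le> subtree_cost Q"
      unfolding X_def
    proof (rule selected_cost_below)
      show "active Q" by (subst Q) (rule active_root)
      show "finite {R \<in> F. root R = Q}" using \<open>finite F\<close> by simp
      show "{R \<in> F. root R = Q} \<subseteq> selected" using \<open>F \<subseteq> selected\<close> by auto
      show "\<forall>R\<in>{R \<in> F. root R = Q}. descendant Q R \<and> fst R \<le> L"
        using \<open>\<And>R. R \<in> F \<Longrightarrow> fst R \<le> L\<close> by (auto simp: descendant_def root_def)
    qed
    moreover have "fst Q = 0" using Q by (metis fst_conv)
    ultimately show "X Q \<le> subtree_cost Q" by (simp add: path_weight_def)
  qed
  also have "\<dots> = infsum (\<lambda>R. w R * c (fst R)) (\<Union>Q\<in>G. {R. descendant Q R})"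
    unfolding subtree_cost_def
  proof (rule sum_infsum)
    show "finite G" using \<open>finite F\<close> by (simp add: G_def)
    fix Q Q' assume "Q \<in> G" "Q' \<in> G" "Q \<noteq> Q'"
    then show "{R. descendant Q R} \<inter> {R. descendant Q' R} = {}"
      using descendant_level_unique by (force simp: G_def root_def)
  qed simp
  also have "\<dots> \<le> infsum (\<lambda>R. w R * c (fst R)) UNIV"
    by (rule infsum_mono_set_ennreal) simp
  finally show "(\<Sum>R\<in>F. c (fst R)) \<le> infsum (\<lambda>R. w R * c (fst R)) UNIV" .
qed

lemma iterated_parent_path:
  assumes "\<And>l. parent (key (Suc l)) = key l" "j \<le> l"
  shows "(parent ^^ (l - j)) (key l) = key j"
  using assms(2)
proof (induction l)
  case (Suc l)
  show ?case
  proof (cases "j = Suc l")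
    case False
    then have "j \<le> l" "Suc l - j = Suc (l - j)" using Suc.prems by auto
    then show ?thesis using Suc.IH assms(1) by (simp add: funpow_Suc_right del: funpow.simps)
  qed simp
qed simp

lemma heavy_path_stops:
  assumes path: "\<And>l. parent (key (Suc l)) = key l"
    and heavy: "1 < infsum (\<lambda>l. w (l, key l)) UNIV"
  shows "\<exists>l. stops (l, key l)"
proof -
  have weight: "path_weight l (key l) = (\<Sum>j<l. w (j, key j))" for l
    unfolding path_weight_def using iterated_parent_path[where key = key, OF path] by simp
  have ex: "\<exists>l. 1 \<le> (\<Sum>j<Suc l. w (j, key j))"
  proof (rule ccontr)
    assume "\<not> ?thesis"
    then have partial: "(\<Sum>j<Suc l. w (j, key j)) < 1" for l by (simp add: not_le)
    have "infsum (\<lambda>l. w (l, key l)) UNIV \<le> 1"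
    proof (rule infsum_le_finite_sums)
      fix F :: "nat set" assume "finite F"
      then have "F \<subseteq> {..<Suc (Max (insert 0 F))}"
        by (auto simp: less_Suc_eq_le)
      then have "sum (\<lambda>l. w (l, key l)) F \<le> (\<Sum>j<Suc (Max (insert 0 F)). w (j, key j))"
        by (intro sum_mono2) auto
      then show "sum (\<lambda>l. w (l, key l)) F \<le> 1"
        using partial[of "Max (insert 0 F)"] by simp
    qed simp
    then show False using heavy by simp
  qed
  define l0 where "l0 = (LEAST l. 1 \<le> (\<Sum>j<Suc l. w (j, key j)))"
  have "1 \<le> (\<Sum>j<Suc l0. w (j, key j))"
    unfolding l0_def using ex by (rule LeastI_ex)
  moreover have "(\<Sum>j<l0. w (j, key j)) < 1"
  proof (cases l0)
    case (Suc l')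
    then have "l' < l0" by simp
    then have "\<not> 1 \<le> (\<Sum>j<Suc l'. w (j, key j))"
      unfolding l0_def by (rule not_less_Least)
    then show ?thesis using Suc by (simp add: not_le)
  qed simp
  ultimately have "stops (l0, key l0)"
    unfolding stops_def by (simp add: weight)
  then show ?thesis ..
qed

lemma selected_meets_heavy_path:
  assumes path: "\<And>l. parent (key (Suc l)) = key l"
    and heavy: "1 < infsum (\<lambda>l. w (l, key l)) UNIV"
  shows "\<exists>l. (l, key l) \<in> selected"
proof -
  define j0 where "j0 = (LEAST j. stops (j, key j))"
  have "stops (j0, key j0)"
    unfolding j0_def using heavy_path_stops[OF path heavy] by (rule LeastI_ex)
  moreover have "active (j0, key j0)"
    unfolding active_def
  proof (intro conjI allI impI)
    show "path_weight (fst (j0, key j0)) (snd (j0, key j0)) < 1"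
      using \<open>stops (j0, key j0)\<close> by (simp add: stops_def)
    fix j assume "j < fst (j0, key j0)"
    then have "j < j0" by simp
    then have "\<not> stops (j, key j)" unfolding j0_def by (rule not_less_Least)
    then show "\<not> stops (j, (parent ^^ (fst (j0, key j0) - j)) (snd (j0, key j0)))"
      using iterated_parent_path[where key = key, OF path, of j j0] \<open>j < fst (j0, key j0)\<close> by simp
  qed
  ultimately show ?thesis by (auto simp: selected_def)
qed

end

section \<open>Dyadic cells\<close>

definition dyadic_index :: "nat \<Rightarrow> real ^ 'd \<Rightarrow> int ^ 'd" where
  "dyadic_index m y = (\<chi> j. \<lfloor>y $ j * 2 ^ m\<rfloor>)"

definition dyadic_parent :: "int ^ 'd \<Rightarrow> int ^ 'd" where
  "dyadic_parent k = (\<chi> j. k $ j div 2)"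

definition unit_offsets :: "(int ^ 'd) set" where
  "unit_offsets = {e. \<forall>j. \<bar>e $ j\<bar> \<le> 1}"

lemma floor_mult_2_div_2: "\<lfloor>x * 2\<rfloor> div 2 = \<lfloor>x :: real\<rfloor>"
proof -
  have "2 * \<lfloor>x\<rfloor> \<le> \<lfloor>x * 2\<rfloor>" by (simp add: le_floor_iff)
  moreover have "\<lfloor>x * 2\<rfloor> < 2 * \<lfloor>x\<rfloor> + 2" by (simp add: floor_less_iff) linarith
  ultimately show ?thesis by presburger
qed

lemma dyadic_parent_index: "dyadic_parent (dyadic_index (Suc m) y) = dyadic_index m y"
  using floor_mult_2_div_2[of "y $ j * 2 ^ m" for j]
  by (simp add: dyadic_parent_def dyadic_index_def vec_eq_iff algebra_simps)

lemma dyadic_index_eq_imp_norm_le: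
  fixes y z :: "real ^ 'd"
  assumes "dyadic_index m y = dyadic_index m z"
  shows "norm (y - z) \<le> real CARD('d) * (1/2) ^ m"
proof -
  have "\<bar>(y - z) $ j\<bar> \<le> (1/2) ^ m" for j
  proof -
    have "\<lfloor>y $ j * 2 ^ m\<rfloor> = \<lfloor>z $ j * 2 ^ m\<rfloor>"
      using assms by (simp add: dyadic_index_def vec_eq_iff)
    then have "\<bar>y $ j * 2 ^ m - z $ j * 2 ^ m\<bar> < 1" by linarith
    then have "\<bar>y $ j - z $ j\<bar> * 2 ^ m < 1"
      by (simp add: abs_mult left_diff_distrib[symmetric])
    then show ?thesis by (simp add: field_simps)
  qed
  then have "(\<Sum>j\<in>UNIV. \<bar>(y - z) $ j\<bar>) \<le> real CARD('d) * (1/2) ^ m"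
    using sum_mono[of UNIV "\<lambda>j. \<bar>(y - z) $ j\<bar>" "\<lambda>_. (1/2) ^ m"] by simp
  then show ?thesis using norm_le_l1_cart[of "y - z"] by linarith
qed

lemma dyadic_index_diff_unit_offset:
  fixes y p :: "real ^ 'd"
  assumes "dist y p \<le> (1/2) ^ m"
  shows "dyadic_index m y - dyadic_index m p \<in> unit_offsets"
proof -
  have "\<bar>y $ j - p $ j\<bar> \<le> (1/2) ^ m" for j
    using component_le_norm_cart[of "y - p" j] assms by (simp add: dist_norm)
  then have "\<bar>y $ j - p $ j\<bar> * 2 ^ m \<le> 1" for j
    by (simp add: power_one_over field_simps)
  then have scaled: "\<bar>y $ j * 2 ^ m - p $ j * 2 ^ m\<bar> \<le> 1" for j
    by (simp add: abs_mult left_diff_distrib[symmetric])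
  have "\<bar>\<lfloor>y $ j * 2 ^ m\<rfloor> - \<lfloor>p $ j * 2 ^ m\<rfloor>\<bar> \<le> 1" for j
    using scaled[of j] by linarith
  then show ?thesis
    by (simp add: unit_offsets_def dyadic_index_def)
qed

lemma finite_unit_offsets: "finite (unit_offsets :: (int ^ 'd) set)"
proof -
  have "unit_offsets \<subseteq> (\<lambda>f. \<chi> j. f j) ` (Pi\<^sub>E (UNIV :: 'd set) (\<lambda>_. {-1..1 :: int}))"
  proof
    fix e :: "int ^ 'd" assume "e \<in> unit_offsets"
    then have "(\<lambda>j. e $ j) \<in> Pi\<^sub>E UNIV (\<lambda>_. {-1..1})"
      by (auto simp: unit_offsets_def abs_le_iff)
    then show "e \<in> (\<lambda>f. \<chi> j. f j) ` (Pi\<^sub>E (UNIV :: 'd set) (\<lambda>_. {-1..1 :: int}))"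
      by (intro image_eqI[of _ _ "\<lambda>j. e $ j"]) auto
  qed
  then show ?thesis
    by (rule finite_subset) (intro finite_imageI finite_PiE; simp)
qed

lemma dyadic_level_exists:
  fixes \<beta> :: real
  assumes "0 < \<beta>" "\<beta> \<le> 1"
  shows "\<exists>m. \<beta> \<le> (1/2) ^ m \<and> (1/2) ^ Suc m < \<beta>"
proof -
  obtain n where "(1/2 :: real) ^ n < \<beta>"
    using real_arch_pow_inv[OF assms(1), of "1/2"] by auto
  moreover have "(1/2 :: real) ^ Suc n \<le> (1/2) ^ n" by simp
  ultimately have ex: "\<exists>n. (1/2 :: real) ^ Suc n < \<beta>" by (meson le_less_trans)
  define m where "m = (LEAST m. (1/2 :: real) ^ Suc m < \<beta>)"
  have "(1/2 :: real) ^ Suc m < \<beta>" unfolding m_def using ex by (rule LeastI_ex)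
  moreover have "\<beta> \<le> (1/2) ^ m"
  proof (cases m)
    case (Suc m')
    then have "m' < m" by simp
    then have "\<not> (1/2 :: real) ^ Suc m' < \<beta>" unfolding m_def by (rule not_less_Least)
    then show ?thesis using Suc by simp
  qed (use assms(2) in simp)
  ultimately show ?thesis by blast
qed

definition dyadic_cell :: "nat \<times> (int ^ 'd) \<Rightarrow> (real ^ 'd) set" where
  "dyadic_cell R = {y. dyadic_index (fst R) y = snd R}"

definition adjacent_cells :: "nat \<Rightarrow> real ^ 'd \<Rightarrow> (nat \<times> (int ^ 'd)) set" where
  "adjacent_cells m p = (\<lambda>e. (m, dyadic_index m p + e)) ` unit_offsets"

lemma dist_dyadic_cell_le:
  fixes x y :: "real ^ 'd"
  shows "x \<in> dyadic_cell R \<Longrightarrow> y \<in> dyadic_cell R \<Longrightarrow> dist x y \<le> real CARD('d) * (1/2) ^ fst R"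
  using dyadic_index_eq_imp_norm_le[of "fst R" x y] by (simp add: dyadic_cell_def dist_norm)

lemma bounded_dyadic_cell: "bounded (dyadic_cell R :: (real ^ 'd) set)"
  unfolding bounded_two_points using dist_dyadic_cell_le by blast

lemma diameter_dyadic_cell_le: "diameter (dyadic_cell R :: (real ^ 'd) set) \<le> real CARD('d) * (1/2) ^ fst R"
  using dist_dyadic_cell_le[of _ R] by (intro diameter_le) (auto simp: dist_norm)

lemma finite_adjacent_cells: "finite (adjacent_cells m p)"
  unfolding adjacent_cells_def using finite_unit_offsets by (rule finite_imageI)

lemma card_adjacent_cells_le: "card (adjacent_cells m (p :: real ^ 'd)) \<le> card (unit_offsets :: (int ^ 'd) set)"
  unfolding adjacent_cells_def using finite_unit_offsets by (rule card_image_le)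

lemma fst_adjacent_cells: "R \<in> adjacent_cells m p \<Longrightarrow> fst R = m"
  by (auto simp: adjacent_cells_def)

lemma dyadic_index_mem_adjacent_cells:
  "dist y p \<le> (1/2) ^ m \<Longrightarrow> (m, dyadic_index m y) \<in> adjacent_cells m p"
  unfolding adjacent_cells_def using dyadic_index_diff_unit_offset[of y p m] by force

lemma infsum_near_le_infsum_levels:
  fixes p :: "nat \<Rightarrow> real ^ 'd" and m :: "nat \<Rightarrow> nat" and \<alpha> :: "nat \<Rightarrow> ennreal"
  shows "infsum \<alpha> {i. dist y (p i) \<le> (1/2) ^ m i} \<le>
    infsum (\<lambda>l. infsum \<alpha> {i. (l, dyadic_index l y) \<in> adjacent_cells (m i) (p i)}) UNIV"
proof (rule infsum_le_finite_sums)
  fix J assume J: "finite J" "J \<subseteq> {i. dist y (p i) \<le> (1/2) ^ m i}"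
  have "sum \<alpha> J = (\<Sum>l\<in>m ` J. sum \<alpha> {i\<in>J. m i = l})"
    by (rule sum.image_gen[OF J(1)])
  also have "\<dots> \<le> (\<Sum>l\<in>m ` J. infsum \<alpha> {i. (l, dyadic_index l y) \<in> adjacent_cells (m i) (p i)})"
  proof (rule sum_mono)
    fix l
    have "{i\<in>J. m i = l} \<subseteq> {i. (l, dyadic_index l y) \<in> adjacent_cells (m i) (p i)}"
      using J(2) dyadic_index_mem_adjacent_cells by fastforce
    then show "sum \<alpha> {i\<in>J. m i = l} \<le> infsum \<alpha> {i. (l, dyadic_index l y) \<in> adjacent_cells (m i) (p i)}"
      using J(1) by (intro sum_le_infsum_ennreal) auto
  qed
  also have "\<dots> \<le> infsum (\<lambda>l. infsum \<alpha> {i. (l, dyadic_index l y) \<in> adjacent_cells (m i) (p i)}) UNIV"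
    using J(1) by (intro sum_le_infsum_ennreal) auto
  finally show "sum \<alpha> J \<le> infsum (\<lambda>l. infsum \<alpha> {i. (l, dyadic_index l y) \<in> adjacent_cells (m i) (p i)}) UNIV" .
qed simp

text \<open>The weight \<open>\<alpha> i\<close> of a ball of radius \<open>2\<^sup>-\<^sup>m\<^sup>i\<close> is put on each of the adjacent cells of that
  size; the stopping-time selection then covers every point of total weight \<open>> 1\<close> by dyadic cells.\<close>
lemma dyadic_weighted_cover:
  fixes p :: "nat \<Rightarrow> real ^ 'd" and m :: "nat \<Rightarrow> nat" and \<alpha> :: "nat \<Rightarrow> ennreal" and q :: real
  assumes "0 \<le> q"
  shows "\<exists>C :: nat \<Rightarrow> (real ^ 'd) set. (\<forall>j. bounded (C j)) \<and>
    {y. 1 < infsum \<alpha> {i. dist y (p i) \<le> (1/2) ^ m i}} \<subseteq> (\<Union>j. C j) \<and>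
    (\<Sum>j. ennreal (diameter (C j) powr q)) \<le>
      of_nat (card (unit_offsets :: (int ^ 'd) set)) *
        (\<Sum>i. \<alpha> i * ennreal ((real CARD('d) * (1/2) ^ m i) powr q))"
proof -
  define cost where "cost l = ennreal ((real CARD('d) * (1/2) ^ l) powr q)" for l
  define w where "w R = infsum \<alpha> {i. R \<in> adjacent_cells (m i) (p i)}" for R
  interpret stopping_tree dyadic_parent w cost
    by unfold_locales (simp add: cost_def)
  define C :: "nat \<Rightarrow> (real ^ 'd) set"
    where "C j = (if j \<in> to_nat ` selected then dyadic_cell (from_nat j) else {})" for j
  have "\<forall>j. bounded (C j)"
    by (simp add: C_def bounded_dyadic_cell)
  moreover have "{y. 1 < infsum \<alpha> {i. dist y (p i) \<le> (1/2) ^ m i}} \<subseteq> (\<Union>j. C j)"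
  proof
    fix y assume "y \<in> {y. 1 < infsum \<alpha> {i. dist y (p i) \<le> (1/2) ^ m i}}"
    then have "1 < infsum (\<lambda>l. w (l, dyadic_index l y)) UNIV"
      unfolding w_def using infsum_near_le_infsum_levels[of \<alpha> y p m] by simp
    then obtain l where "(l, dyadic_index l y) \<in> selected"
      using selected_meets_heavy_path[of "\<lambda>l. dyadic_index l y"] dyadic_parent_index by blast
    then show "y \<in> (\<Union>j. C j)"
      by (intro UN_I[of "to_nat (l, dyadic_index l y)"]) (auto simp: C_def dyadic_cell_def)
  qed
  moreover have "(\<Sum>j. ennreal (diameter (C j) powr q)) \<le>
      of_nat (card (unit_offsets :: (int ^ 'd) set)) * (\<Sum>i. \<alpha> i * cost (m i))"
  proof -
    have "(\<Sum>j. ennreal (diameter (C j) powr q)) = infsum (\<lambda>j. ennreal (diameter (C j) powr q)) (to_nat ` selected)"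
      unfolding suminf_eq_infsum_ennreal by (rule infsum_cong_neutral) (auto simp: C_def)
    also have "\<dots> = infsum ((\<lambda>j. ennreal (diameter (C j) powr q)) \<circ> to_nat) selected"
      by (rule infsum_reindex) (simp add: inj_on_def)
    also have "\<dots> = infsum (\<lambda>R. ennreal (diameter (dyadic_cell R) powr q)) selected"
      by (rule infsum_cong) (simp add: C_def)
    also have "\<dots> \<le> infsum (\<lambda>R. cost (fst R)) selected"
      unfolding cost_def using assms diameter_dyadic_cell_le
      by (intro infsum_mono ennreal_leI powr_mono2) (auto simp: diameter_ge_0 bounded_dyadic_cell)
    also have "\<dots> \<le> infsum (\<lambda>R. w R * cost (fst R)) UNIV"
      by (rule selected_cost_le)
    also have "\<dots> \<le> of_nat (card (unit_offsets :: (int ^ 'd) set)) * infsum (\<lambda>i. \<alpha> i * cost (m i)) UNIV"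
      unfolding w_def
    proof (rule infsum_multiplicity_le[where N = "\<lambda>i. adjacent_cells (m i) (p i)" and h = "\<lambda>i. cost (m i)"])
      show "finite (adjacent_cells (m i) (p i))" for i
        by (rule finite_adjacent_cells)
      show "card (adjacent_cells (m i) (p i)) \<le> card (unit_offsets :: (int ^ 'd) set)" for i
        by (rule card_adjacent_cells_le)
      show "cost (fst R) = cost (m i)" if "R \<in> adjacent_cells (m i) (p i)" for i R
        using fst_adjacent_cells[OF that] by simp
      show "cost (fst R) \<noteq> \<infinity>" for R
        by (simp add: cost_def)
    qed
    finally show ?thesis
      by (simp add: suminf_eq_infsum_ennreal)
  qed
  ultimately show ?thesis
    unfolding cost_def by blast
qed

section \<open>Fibres of a map with small image covers\<close>

lemma fibre_content_gt_imp_weight_gt: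
  fixes v :: "'a::metric_space \<Rightarrow> 'b" and D :: "nat \<Rightarrow> 'a set"
  assumes "0 < s" "0 < t" "\<And>i. bounded (D i)" "\<And>i. diameter (D i) < 1" "E \<subseteq> (\<Union>i. D i)"
    and "ennreal t < hausdorff_pre s 1 (E \<inter> v -` {y})"
  shows "1 < infsum (\<lambda>i. ennreal (1 / t) * ennreal (diameter (D i) powr s)) {i. y \<in> v ` D i}"
proof -
  have "ennreal t < infsum (\<lambda>i. ennreal (diameter (D i) powr s)) {i. y \<in> v ` D i}"
    using assms(6) hausdorff_pre_fibre_le[OF assms(1,3,4,5)] by (rule less_le_trans)
  then have "ennreal (1 / t) * ennreal t <
      ennreal (1 / t) * infsum (\<lambda>i. ennreal (diameter (D i) powr s)) {i. y \<in> v ` D i}"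
    using \<open>0 < t\<close> by (intro ennreal_mult_strict_left_mono) auto
  moreover have "ennreal (1 / t) * ennreal t = 1"
    using \<open>0 < t\<close> by (simp add: ennreal_mult[symmetric])
  ultimately show ?thesis
    by (simp add: infsum_cmult_left_ennreal)
qed

text \<open>Padding \<open>b i\<close> to \<open>\<beta> i\<close> keeps every level finite while adding at most \<open>\<epsilon>\<close> to the sum of the
  \<open>\<sigma>\<close>-th powers.\<close>
lemma padded_dyadic_levels:
  fixes b :: "nat \<Rightarrow> real"
  assumes "0 < \<sigma>" "0 < \<epsilon>" "\<epsilon> \<le> 1" "\<And>i. b i < 1"
  obtains \<beta> m where "\<And>i. 0 < \<beta> i" "\<And>i. b i \<le> (1/2) ^ m i" "\<And>i. (1/2) ^ Suc (m i) < \<beta> i"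
    "\<And>i. \<beta> i powr \<sigma> \<le> b i powr \<sigma> + \<epsilon> / 2 ^ Suc i"
proof -
  define \<beta> where "\<beta> i = max (b i) ((\<epsilon> / 2 ^ Suc i) powr (1 / \<sigma>))" for i
  have \<beta>_pos: "0 < \<beta> i" for i
    using \<open>0 < \<epsilon>\<close> by (simp add: \<beta>_def less_max_iff_disj)
  have "\<beta> i \<le> 1" for i
  proof -
    have "\<epsilon> / 2 ^ Suc i \<le> \<epsilon>"
      using divide_left_mono[of 1 "2 ^ Suc i" \<epsilon>] one_le_power[of "2 :: real" "Suc i"] \<open>0 < \<epsilon>\<close>
      by simp
    moreover have "0 < \<epsilon> / 2 ^ Suc i"
      using \<open>0 < \<epsilon>\<close> by simp
    ultimately have "\<bar>\<epsilon> / 2 ^ Suc i\<bar> \<le> 1"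
      using \<open>\<epsilon> \<le> 1\<close> by (metis abs_of_pos order.trans)
    then have "(\<epsilon> / 2 ^ Suc i) powr (1 / \<sigma>) \<le> 1"
      using \<open>0 < \<sigma>\<close> by (intro powr_le1) auto
    then show ?thesis using assms(4)[of i] by (simp add: \<beta>_def)
  qed
  then have "\<forall>i. \<exists>m. \<beta> i \<le> (1/2) ^ m \<and> (1/2) ^ Suc m < \<beta> i"
    using dyadic_level_exists \<beta>_pos by blast
  then have "\<exists>m. \<forall>i. \<beta> i \<le> (1/2) ^ m i \<and> (1/2) ^ Suc (m i) < \<beta> i"
    by (rule choice)
  then obtain m where m: "\<And>i. \<beta> i \<le> (1/2) ^ m i" "\<And>i. (1/2) ^ Suc (m i) < \<beta> i"
    by blast
  show ?thesis
  proof (rule that[OF \<beta>_pos _ m(2)])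
    show "b i \<le> (1/2) ^ m i" for i
      using m(1)[of i] by (simp add: \<beta>_def)
    show "\<beta> i powr \<sigma> \<le> b i powr \<sigma> + \<epsilon> / 2 ^ Suc i" for i
      using \<open>0 < \<epsilon>\<close> \<open>0 < \<sigma>\<close> by (auto simp: \<beta>_def max_def powr_powr)
  qed
qed

lemma dyadic_cost_interpolation_le:
  fixes a \<beta> d :: real
  assumes "0 \<le> a" "0 < \<beta>" "(1/2) ^ Suc m < \<beta>" "0 \<le> d" "0 < q" "q < \<sigma>"
  shows "a powr (\<tau> * (1 - q / \<sigma>)) * (d * (1/2) ^ m) powr q \<le> (2 * d) powr q * (a powr \<tau> + \<beta> powr \<sigma>)"
proof -
  have "(1/2) ^ m \<le> 2 * \<beta>"
    using assms(3) by simp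
  then have "d * (1/2) ^ m \<le> 2 * d * \<beta>"
    using assms(4) mult_left_mono by fastforce
  then have "(d * (1/2) ^ m) powr q \<le> (2 * d * \<beta>) powr q"
    by (rule powr_mono2[rotated 2]) (use assms in auto)
  also have "\<dots> = (2 * d) powr q * \<beta> powr q"
    using assms(2,4) by (simp add: powr_mult)
  finally have "(d * (1/2) ^ m) powr q \<le> (2 * d) powr q * \<beta> powr q" .
  then have "a powr (\<tau> * (1 - q / \<sigma>)) * (d * (1/2) ^ m) powr q \<le>
      a powr (\<tau> * (1 - q / \<sigma>)) * ((2 * d) powr q * \<beta> powr q)"
    by (rule mult_left_mono) simp
  also have "\<dots> = (2 * d) powr q * (a powr (\<tau> * (1 - q / \<sigma>)) * \<beta> powr q)"
    by (simp add: mult.left_commute)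
  also have "\<dots> \<le> (2 * d) powr q * (a powr \<tau> + \<beta> powr \<sigma>)"
    using assms by (intro mult_left_mono powr_interpolation_le) auto
  finally show ?thesis .
qed

lemma suminf_le_three_budgets:
  fixes A B :: "nat \<Rightarrow> real" and f :: "nat \<Rightarrow> ennreal"
  assumes "(\<Sum>i. ennreal (A i)) < ennreal \<epsilon>" "(\<Sum>i. ennreal (B i)) < ennreal \<epsilon>" "0 \<le> K" "0 < \<epsilon>"
    and "\<And>i. f i \<le> ennreal K * (ennreal (A i) + ennreal (B i) + ennreal (\<epsilon> / 2 ^ Suc i))"
  shows "(\<Sum>i. f i) \<le> ennreal (K * (3 * \<epsilon>))"
proof -
  have "(\<Sum>i. f i) \<le> (\<Sum>i. ennreal K * (ennreal (A i) + ennreal (B i) + ennreal (\<epsilon> / 2 ^ Suc i)))"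
    by (intro suminf_le assms(5)) auto
  also have "\<dots> = ennreal K * ((\<Sum>i. ennreal (A i)) + (\<Sum>i. ennreal (B i)) + (\<Sum>i. ennreal (\<epsilon> / 2 ^ Suc i)))"
    by (simp add: ennreal_suminf_cmult suminf_add[symmetric])
  also have "\<dots> \<le> ennreal K * (ennreal \<epsilon> + ennreal \<epsilon> + ennreal \<epsilon>)"
    using assms(1,2) unfolding suminf_ennreal_halves[OF less_imp_le[OF \<open>0 < \<epsilon>\<close>]]
    by (intro mult_left_mono add_mono) auto
  also have "\<dots> = ennreal (K * (3 * \<epsilon>))"
    using \<open>0 \<le> K\<close> \<open>0 < \<epsilon>\<close> by (simp add: ennreal_mult[symmetric] ennreal_plus[symmetric] del: ennreal_plus)
  finally show ?thesis .
qed

lemma less_one_of_suminf_powr: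
  fixes x :: "nat \<Rightarrow> real"
  assumes "(\<Sum>i. ennreal (x i powr r)) < ennreal \<epsilon>" "\<epsilon> \<le> 1" "0 \<le> x i" "0 < r"
  shows "x i < 1"
proof (rule powr_less_cancel_nonneg[OF assms(3) zero_le_one assms(4)])
  have "ennreal (x i powr r) < ennreal \<epsilon>"
    by (rule ennreal_suminf_lessD[OF assms(1)])
  then have "x i powr r < \<epsilon>"
    by (simp add: ennreal_less_iff)
  then show "x i powr r < 1 powr r"
    using assms(2) by auto
qed

lemma fibre_level_set_cover:
  fixes v :: "real ^ 'n \<Rightarrow> real ^ 'd" and D :: "nat \<Rightarrow> (real ^ 'n) set"
  assumes "0 < \<tau>" "0 < q" "q < \<sigma>" "0 < t" "continuous_on UNIV v"
    and D: "\<And>i. compact (D i)" "E \<subseteq> (\<Union>i. D i)"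
      "(\<Sum>i. ennreal (diameter (D i) powr \<tau>)) < ennreal \<epsilon>"
      "(\<Sum>i. ennreal (diameter (v ` D i) powr \<sigma>)) < ennreal \<epsilon>"
    and "\<epsilon> \<le> 1"
  shows "\<exists>C. (\<forall>j. bounded (C j)) \<and>
    {y. ennreal t < hausdorff_pre (\<tau> * (1 - q / \<sigma>)) 1 (E \<inter> v -` {y})} \<subseteq> (\<Union>j. C j) \<and>
    (\<Sum>j. ennreal (diameter (C j) powr q)) \<le>
      ennreal (real (card (unit_offsets :: (int ^ 'd) set)) * ((2 * real CARD('d)) powr q / t) * (3 * \<epsilon>))"
proof -
  define s where "s = \<tau> * (1 - q / \<sigma>)"
  have "0 < \<sigma>" using assms(2,3) by simp
  have "0 < s" using assms(1-3) by (simp add: s_def field_simps)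
  define K where "K = (2 * real CARD('d)) powr q / t"
  have "0 \<le> K" using \<open>0 < t\<close> by (simp add: K_def)
  have "0 < ennreal \<epsilon>" using D(3) by (rule le_less_trans[OF zero_le])
  then have "0 < \<epsilon>" by simp
  define a where "a i = diameter (D i)" for i
  define b where "b i = diameter (v ` D i)" for i
  have bounded_image: "bounded (v ` D i)" for i
    using D(1) continuous_on_subset[OF assms(5) subset_UNIV]
    by (intro compact_imp_bounded compact_continuous_image) auto
  have a0: "0 \<le> a i" and b0: "0 \<le> b i" for i
    unfolding a_def b_def using D(1) bounded_image by (simp_all add: compact_imp_bounded diameter_ge_0)
  have a1: "a i < 1" and b1: "b i < 1" for i
    using less_one_of_suminf_powr[OF D(3) \<open>\<epsilon> \<le> 1\<close> _ \<open>0 < \<tau>\<close>] a0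
      less_one_of_suminf_powr[OF D(4) \<open>\<epsilon> \<le> 1\<close> _ \<open>0 < \<sigma>\<close>] b0
    unfolding a_def b_def by auto
  obtain \<beta> m where \<beta>: "\<And>i. 0 < \<beta> i" "\<And>i. b i \<le> (1/2) ^ m i" "\<And>i. (1/2) ^ Suc (m i) < \<beta> i"
    "\<And>i. \<beta> i powr \<sigma> \<le> b i powr \<sigma> + \<epsilon> / 2 ^ Suc i"
  proof (rule padded_dyadic_levels[OF \<open>0 < \<sigma>\<close> \<open>0 < \<epsilon>\<close> \<open>\<epsilon> \<le> 1\<close>])
    show "b i < 1" for i by (rule b1)
  qed (rule that)
  define p where "p i = (SOME p. p \<in> v ` D i)" for i
  define \<alpha> where "\<alpha> i = ennreal (1 / t) * ennreal (a i powr s)" for i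
  define cost where "cost i = ennreal ((real CARD('d) * (1/2) ^ m i) powr q)" for i
  obtain C :: "nat \<Rightarrow> (real ^ 'd) set" where C: "\<forall>j. bounded (C j)"
    "{y. 1 < infsum \<alpha> {i. dist y (p i) \<le> (1/2) ^ m i}} \<subseteq> (\<Union>j. C j)"
    "(\<Sum>j. ennreal (diameter (C j) powr q)) \<le>
      of_nat (card (unit_offsets :: (int ^ 'd) set)) * (\<Sum>i. \<alpha> i * cost i)"
    using dyadic_weighted_cover[where p = p and m = m and \<alpha> = \<alpha>, OF less_imp_le[OF assms(2)]]
    unfolding cost_def by blast
  have cover: "{y. ennreal t < hausdorff_pre s 1 (E \<inter> v -` {y})} \<subseteq> (\<Union>j. C j)"
  proof
    fix y assume "y \<in> {y. ennreal t < hausdorff_pre s 1 (E \<inter> v -` {y})}"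
    then have "1 < infsum \<alpha> {i. y \<in> v ` D i}"
      unfolding \<alpha>_def a_def using D(1,2) a1
      by (intro fibre_content_gt_imp_weight_gt[OF \<open>0 < s\<close> \<open>0 < t\<close>])
        (auto simp: compact_imp_bounded a_def)
    also have "\<dots> \<le> infsum \<alpha> {i. dist y (p i) \<le> (1/2) ^ m i}"
    proof (rule infsum_mono_set_ennreal, rule subsetI)
      fix i assume "i \<in> {i. y \<in> v ` D i}"
      then have y: "y \<in> v ` D i" by simp
      then have "p i \<in> v ` D i" unfolding p_def by (rule someI)
      then have "dist y (p i) \<le> b i"
        unfolding b_def using y bounded_image by (intro diameter_bounded_bound)
      then show "i \<in> {i. dist y (p i) \<le> (1/2) ^ m i}"
        using \<beta>(2)[of i] by simp
    qed
    finally show "y \<in> (\<Union>j. C j)" using C(2) by blast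
  qed
  have each: "\<alpha> i * cost i \<le>
      ennreal K * (ennreal (a i powr \<tau>) + ennreal (b i powr \<sigma>) + ennreal (\<epsilon> / 2 ^ Suc i))" for i
  proof -
    have "a i powr s * (real CARD('d) * (1/2) ^ m i) powr q \<le>
        (2 * real CARD('d)) powr q * (a i powr \<tau> + \<beta> i powr \<sigma>)"
      unfolding s_def by (rule dyadic_cost_interpolation_le[OF a0 \<beta>(1) \<beta>(3) _ assms(2,3)]) simp
    then have "a i powr s * (real CARD('d) * (1/2) ^ m i) powr q / t \<le>
        (2 * real CARD('d)) powr q * (a i powr \<tau> + \<beta> i powr \<sigma>) / t"
      using \<open>0 < t\<close> by (intro divide_right_mono) auto
    then have "a i powr s / t * (real CARD('d) * (1/2) ^ m i) powr q \<le> K * (a i powr \<tau> + \<beta> i powr \<sigma>)"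
      by (simp add: K_def)
    also have "\<dots> \<le> K * (a i powr \<tau> + b i powr \<sigma> + \<epsilon> / 2 ^ Suc i)"
      using \<beta>(4)[of i] \<open>0 \<le> K\<close> by (intro mult_left_mono) auto
    finally show ?thesis
      using \<open>0 < t\<close> \<open>0 \<le> K\<close> \<open>0 < \<epsilon>\<close>
      by (simp add: \<alpha>_def cost_def ennreal_mult[symmetric] ennreal_plus[symmetric] ennreal_leI
          del: ennreal_plus)
  qed
  have "(\<Sum>i. \<alpha> i * cost i) \<le> ennreal (K * (3 * \<epsilon>))"
    using D(3,4) \<open>0 \<le> K\<close> \<open>0 < \<epsilon>\<close> each unfolding a_def b_def by (rule suminf_le_three_budgets)
  then have "of_nat (card (unit_offsets :: (int ^ 'd) set)) * (\<Sum>i. \<alpha> i * cost i) \<le>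
      of_nat (card (unit_offsets :: (int ^ 'd) set)) * ennreal (K * (3 * \<epsilon>))"
    by (rule mult_left_mono) simp
  also have "\<dots> = ennreal (real (card (unit_offsets :: (int ^ 'd) set)) * K * (3 * \<epsilon>))"
    using \<open>0 \<le> K\<close> \<open>0 < \<epsilon>\<close>
    by (simp add: ennreal_of_nat_eq_real_of_nat ennreal_mult[symmetric] mult.assoc)
  finally have "(\<Sum>j. ennreal (diameter (C j) powr q)) \<le>
      ennreal (real (card (unit_offsets :: (int ^ 'd) set)) * K * (3 * \<epsilon>))"
    using C(3) by (rule order_trans[rotated])
  with C(1) cover show ?thesis
    unfolding s_def K_def by blast
qed

lemma hausdorff_image_null:
  fixes v :: "'a::metric_space \<Rightarrow> 'b::metric_space"
  assumes "0 < \<sigma>" "continuous_on UNIV v"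
    and covers: "\<And>\<epsilon>. 0 < \<epsilon> \<Longrightarrow> \<exists>D :: nat \<Rightarrow> 'a set. (\<forall>i. compact (D i)) \<and> E \<subseteq> (\<Union>i. D i) \<and>
        (\<Sum>i. ennreal (diameter (v ` D i) powr \<sigma>)) < ennreal \<epsilon>"
  shows "hausdorff \<sigma> (v ` E) = 0"
proof (rule hausdorff_eq_0_if_covers[OF \<open>0 < \<sigma>\<close>])
  fix \<epsilon> :: real assume "0 < \<epsilon>"
  obtain D where D: "\<forall>i. compact (D i)" "E \<subseteq> (\<Union>i. D i)"
    "(\<Sum>i. ennreal (diameter (v ` D i) powr \<sigma>)) < ennreal \<epsilon>"
    using covers[OF \<open>0 < \<epsilon>\<close>] by blast
  have "bounded (v ` D i)" for i
    using D(1) continuous_on_subset[OF assms(2) subset_UNIV]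
    by (intro compact_imp_bounded compact_continuous_image) auto
  moreover have "v ` E \<subseteq> (\<Union>i. v ` D i)"
    using D(2) by blast
  ultimately show "\<exists>C. (\<forall>i. bounded (C i)) \<and> v ` E \<subseteq> (\<Union>i. C i) \<and>
      (\<Sum>i. ennreal (diameter (C i) powr \<sigma>)) < ennreal \<epsilon>"
    using D(3) by (intro exI[of _ "\<lambda>i. v ` D i"]) blast
qed

lemma nonnull_fibres_subset_image: "{y. hausdorff s (E \<inter> v -` {y}) \<noteq> 0} \<subseteq> v ` E"
proof
  fix y assume "y \<in> {y. hausdorff s (E \<inter> v -` {y}) \<noteq> 0}"
  then have "E \<inter> v -` {y} \<noteq> {}" by (auto simp: hausdorff_empty)
  then show "y \<in> v ` E" by blast
qed

lemma hausdorff_nonnull_fibres_null: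
  fixes v :: "'a::metric_space \<Rightarrow> 'b::metric_space"
  assumes "0 < \<sigma>" "continuous_on UNIV v"
    and covers: "\<And>\<epsilon>. 0 < \<epsilon> \<Longrightarrow> \<exists>D :: nat \<Rightarrow> 'a set. (\<forall>i. compact (D i)) \<and> E \<subseteq> (\<Union>i. D i) \<and>
        (\<Sum>i. ennreal (diameter (D i) powr \<tau>)) < ennreal \<epsilon> \<and>
        (\<Sum>i. ennreal (diameter (v ` D i) powr \<sigma>)) < ennreal \<epsilon>"
  shows "hausdorff \<sigma> {y. hausdorff s (E \<inter> v -` {y}) \<noteq> 0} = 0"
proof (rule hausdorff_null_subset[OF _ nonnull_fibres_subset_image])
  show "hausdorff \<sigma> (v ` E) = 0"
  proof (rule hausdorff_image_null[OF assms(1,2)])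
    fix \<epsilon> :: real assume "0 < \<epsilon>"
    obtain D where "\<forall>i. compact (D i)" "E \<subseteq> (\<Union>i. D i)"
      "(\<Sum>i. ennreal (diameter (v ` D i) powr \<sigma>)) < ennreal \<epsilon>"
      using covers[OF \<open>0 < \<epsilon>\<close>] by blast
    then show "\<exists>D. (\<forall>i. compact (D i)) \<and> E \<subseteq> (\<Union>i. D i) \<and>
        (\<Sum>i. ennreal (diameter (v ` D i) powr \<sigma>)) < ennreal \<epsilon>"
      by blast
  qed
qed

lemma fibre_level_set_null:
  fixes v :: "real ^ 'n \<Rightarrow> real ^ 'd"
  assumes "0 < \<tau>" "0 < q" "q < \<sigma>" "0 < t" "continuous_on UNIV v"
    and covers: "\<And>\<epsilon>. 0 < \<epsilon> \<Longrightarrow> \<exists>D :: nat \<Rightarrow> (real ^ 'n) set. (\<forall>i. compact (D i)) \<and> E \<subseteq> (\<Union>i. D i) \<and>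
        (\<Sum>i. ennreal (diameter (D i) powr \<tau>)) < ennreal \<epsilon> \<and>
        (\<Sum>i. ennreal (diameter (v ` D i) powr \<sigma>)) < ennreal \<epsilon>"
  shows "hausdorff q {y. ennreal t < hausdorff_pre (\<tau> * (1 - q / \<sigma>)) 1 (E \<inter> v -` {y})} = 0"
proof (rule hausdorff_eq_0_if_covers[OF \<open>0 < q\<close>])
  fix \<eta> :: real assume "0 < \<eta>"
  define K where "K = real (card (unit_offsets :: (int ^ 'd) set)) * ((2 * real CARD('d)) powr q / t)"
  have "0 \<le> K" using \<open>0 < t\<close> by (simp add: K_def)
  define \<epsilon> where "\<epsilon> = min 1 (\<eta> / (3 * K + 1))"
  have "0 < \<epsilon>" "\<epsilon> \<le> 1" using \<open>0 < \<eta>\<close> \<open>0 \<le> K\<close> by (simp_all add: \<epsilon>_def)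
  have "K * (3 * \<epsilon>) < \<eta>"
  proof -
    have "K * (3 * \<epsilon>) = 3 * K * \<epsilon>" by simp
    also have "\<dots> \<le> 3 * K * (\<eta> / (3 * K + 1))"
      using \<open>0 \<le> K\<close> by (intro mult_left_mono) (auto simp: \<epsilon>_def)
    also have "\<dots> < \<eta>"
      using \<open>0 < \<eta>\<close> \<open>0 \<le> K\<close> by (simp add: field_simps)
    finally show ?thesis .
  qed
  obtain D where D: "\<And>i. compact (D i)" "E \<subseteq> (\<Union>i. D i)"
    "(\<Sum>i. ennreal (diameter (D i) powr \<tau>)) < ennreal \<epsilon>"
    "(\<Sum>i. ennreal (diameter (v ` D i) powr \<sigma>)) < ennreal \<epsilon>"
    using covers[OF \<open>0 < \<epsilon>\<close>] by blast
  obtain C :: "nat \<Rightarrow> (real ^ 'd) set" where C: "\<forall>j. bounded (C j)"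
    "{y. ennreal t < hausdorff_pre (\<tau> * (1 - q / \<sigma>)) 1 (E \<inter> v -` {y})} \<subseteq> (\<Union>j. C j)"
    "(\<Sum>j. ennreal (diameter (C j) powr q)) \<le> ennreal (K * (3 * \<epsilon>))"
    using fibre_level_set_cover[OF assms(1-5) D \<open>\<epsilon> \<le> 1\<close>] unfolding K_def by blast
  have "ennreal (K * (3 * \<epsilon>)) < ennreal \<eta>"
    using \<open>0 < \<eta>\<close> \<open>K * (3 * \<epsilon>) < \<eta>\<close> by (rule ennreal_lessI)
  with C(3) have "(\<Sum>j. ennreal (diameter (C j) powr q)) < ennreal \<eta>"
    by (rule le_less_trans)
  with C(1,2) show "\<exists>C. (\<forall>i. bounded (C i)) \<and>
      {y. ennreal t < hausdorff_pre (\<tau> * (1 - q / \<sigma>)) 1 (E \<inter> v -` {y})} \<subseteq> (\<Union>i. C i) \<and>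
      (\<Sum>i. ennreal (diameter (C i) powr q)) < ennreal \<eta>"
    by blast
qed

lemma hausdorff_fibres_null:
  fixes v :: "real ^ 'n \<Rightarrow> real ^ 'd"
  assumes "0 < \<tau>" "0 < q" "q < \<sigma>" "continuous_on UNIV v"
    and covers: "\<And>\<epsilon>. 0 < \<epsilon> \<Longrightarrow> \<exists>D :: nat \<Rightarrow> (real ^ 'n) set. (\<forall>i. compact (D i)) \<and> E \<subseteq> (\<Union>i. D i) \<and>
        (\<Sum>i. ennreal (diameter (D i) powr \<tau>)) < ennreal \<epsilon> \<and>
        (\<Sum>i. ennreal (diameter (v ` D i) powr \<sigma>)) < ennreal \<epsilon>"
  shows "hausdorff q {y. hausdorff (\<tau> * (1 - q / \<sigma>)) (E \<inter> v -` {y}) \<noteq> 0} = 0"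
proof -
  define s where "s = \<tau> * (1 - q / \<sigma>)"
  have "0 < s" using assms(1-3) by (simp add: s_def field_simps)
  have "{y. hausdorff s (E \<inter> v -` {y}) \<noteq> 0} \<subseteq>
      (\<Union>k. {y. ennreal (1 / real (Suc k)) < hausdorff_pre s 1 (E \<inter> v -` {y})})"
  proof
    fix y assume "y \<in> {y. hausdorff s (E \<inter> v -` {y}) \<noteq> 0}"
    then have "0 < hausdorff_pre s 1 (E \<inter> v -` {y})"
      using hausdorff_eq_0_if_hausdorff_pre_1[OF \<open>0 < s\<close>] by (auto simp: zero_less_iff_neq_zero)
    then show "y \<in> (\<Union>k. {y. ennreal (1 / real (Suc k)) < hausdorff_pre s 1 (E \<inter> v -` {y})})"
      using ennreal_inverse_Suc_less by blast
  qed
  moreover have "hausdorff q (\<Union>k. {y. ennreal (1 / real (Suc k)) < hausdorff_pre s 1 (E \<inter> v -` {y})}) = 0"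
    using fibre_level_set_null[OF assms(1-3) _ assms(4) covers] unfolding s_def
    by (intro hausdorff_null_UN) simp
  ultimately show ?thesis
    unfolding s_def by (rule hausdorff_null_subset[rotated])
qed

theorem theorem4p1:
  fixes v :: "real ^ 'n \<Rightarrow> real ^ 'd" and \<tau> \<sigma> :: real
  assumes "0 < \<tau>" and "\<tau> \<le> real CARD('n)" and "0 < \<sigma>"
    and "continuous_on UNIV v"
    and "\<And>E \<epsilon>. hausdorff \<tau> E = 0 \<Longrightarrow> 0 < \<epsilon> \<Longrightarrow>
           \<exists>D :: nat \<Rightarrow> (real ^ 'n) set. (\<forall>i. compact (D i)) \<and> E \<subseteq> (\<Union>i. D i) \<and>
              (\<Sum>i. ennreal (diameter (D i) powr \<tau>)) < ennreal \<epsilon> \<and>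
              (\<Sum>i. ennreal (diameter (v ` D i) powr \<sigma>)) < ennreal \<epsilon>"
  shows "N_star_property \<tau> \<sigma> v"
  unfolding N_star_property_def
proof (intro ballI allI impI)
  fix q and E :: "(real ^ 'n) set"
  assume "q \<in> {0..\<sigma>}" and E: "hausdorff \<tau> E = 0"
  note covers = assms(5)[OF E]
  consider "q = 0" | "q = \<sigma>" | "0 < q" "q < \<sigma>"
    using \<open>q \<in> {0..\<sigma>}\<close> by fastforce
  then show "hausdorff q {y. hausdorff (\<tau> * (1 - q / \<sigma>)) (E \<inter> v -` {y}) \<noteq> 0} = 0"
  proof cases
    case 1
    then show ?thesis
      using hausdorff_null_subset[OF E] by (simp add: hausdorff_empty)
  next
    case 2
    then show ?thesis
      using hausdorff_nonnull_fibres_null[OF assms(3,4) covers] by simp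
  next
    case 3
    then show ?thesis
      by (rule hausdorff_fibres_null[OF assms(1) _ _ assms(4) covers])
  qed
qed

end
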